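(* Let $f,G,h$, $\bar g(x)=\|G(x)G(x)^\intercal\|_\infty$, $\Omega$, its triangulation $\mathcal{T}=\{\sigma_i\}_{i=1}^{m_{\mathcal{T}}}$, and the constants $\beta_i,\tilde\beta_i,\bar\beta_i,c_{i,j}$ be as in the context. Let $\underline{\mathbf{y}}=[\mathbf{V},\mathbf{L},b_1,\gamma]$, with $\mathbf{V}=\{V_x\}_{x\in\mathbb{E}_{\mathcal{T}}}$, $\mathbf{L}=\{l_i\}\subset\mathbb{R}^n$, be a feasible point of system (F): $\gamma>0$; $V_x\ge0$ for all $x\in\mathbb{E}_{\mathcal{T}}$; $|\nabla V_i|\le l_i$ componentwise for all $i$; $H_{i,j}\le -b_1$ for all $i$ and all $j\in\mathbb{Z}_0^n$ with $x_{i,j}\ne0$, where $H_{i,j}=f(x_{i,j})^\intercal\nabla V_i+\tfrac12\|h(x_{i,j})\|_2^2+(1_n^\intercal l_i\beta_i+\tfrac12\tilde\beta_i)c_{i,j}+\tfrac{1}{2\gamma}(\bar g(x_{i,j})+\bar\beta_ic_{i,j})(1_n^\intercal l_i)^2$. Let $J$ be a cost function and consider the problem of minimizing $J(\underline{\mathbf{y}}+\delta\mathbf{y})$ over $\delta\mathbf{y}=[\delta\mathbf{V},\delta\mathbf{L},\delta b_1,\delta\gamma]$ subject to: $\gamma+\delta\gamma>0$; $V_x+\delta V_x\ge0$ for all $x\in\mathbb{E}_{\mathcal{T}}$; $|\nabla V_i+\delta\nabla V_i|\le l_i+\delta l_i$ componentwise for all $i$, where $\delta\nabla V_i=X_i^{-1}\delta\bar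 V_i$; and $P_{i,j}\preceq0$ for all $i$ and all $j$ with $x_{i,j}\ne0$, where $$P_{i,j}=\begin{bmatrix}\phi_{i,j}+b_1+\delta b_1 & \sqrt{e_{i,j}}\,1_n^\intercal(l_i+\delta l_i)\\ \sqrt{e_{i,j}}\,1_n^\intercal(l_i+\delta l_i) & -(\gamma+\delta\gamma)\end{bmatrix},$$ $\phi_{i,j}=f(x_{i,j})^\intercal(\nabla V_i+\delta\nabla V_i)+1_n^\intercal(l_i+\delta l_i)\beta_ic_{i,j}+\tfrac12h(x_{i,j})^\intercal h(x_{i,j})+\tfrac12\tilde\beta_ic_{i,j}$ and $e_{i,j}=\tfrac12\big(\bar g(x_{i,j})+\bar\beta_ic_{i,j}\big)$. Then for every $\delta\mathbf{y}$ feasible for this problem, $\underline{\mathbf{y}}+\delta\mathbf{y}$ is a feasible point of (F); and if $\delta\mathbf{y}^\ast$ is an optimal solution, then $J(\underline{\mathbf{y}}+\delta\mathbf{y}^\ast)\le J(\underline{\mathbf{y}})$.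
   Context: Setting: $f:\mathcal{X}\to\mathbb{R}^n$, $G:\mathcal{X}\to\mathbb{R}^{n\times m}$, $h:\mathcal{X}\to\mathbb{R}^q$, $\Omega\subseteq\mathcal{X}$ a compact set with connected interior containing $0$ and equal to the closure of its interior, $\mathcal{T}$ a triangulation of $\Omega$ (finite collection of $n$-simplexes $\sigma_i=\mathrm{co}(\{x_{i,j}\}_{j=0}^n)$ covering $\Omega$, pairwise meeting in common faces or not at all; vertex set $\mathbb{E}_{\mathcal{T}}$; $x_{i,0}=0$ when $0\in\sigma_i$), with $f,G,h$ continuous and $\mathcal{C}^2$ on each simplex. Constants: $\beta_i$, $\tilde\beta_i$, $\bar\beta_i$ are upper bounds over $\sigma_i$ of the absolute values of all second partial derivatives of the components of $f$, of $h^\intercal h$, and of $\bar g$, respectively; $c_{i,j}=\tfrac n2\|x_{i,j}-x_{i,0}\|_2(\max_{k\in\mathbb{Z}_1^n}\|x_{i,k}-x_{i,0}\|_2+\|x_{i,j}-x_{i,0}\|_2)$. $X_i$ is the matrix with rows $(x_{i,j}-x_{i,0})^\intercal$, $\bar V_i$ (resp. $\delta\bar V_i$) the vector with entries $V_{x_{i,j}}-V_{x_{i,0}}$ (resp. $\delta V_{x_{i,j}}-\delta V_{x_{i,0}}$), and $\nabla V_i=X_i^{-1}\bar V_i$. $\|\cdot\|_\infty$ on matrices is the induced norm, $1_n$ the all-ones vector, $|v|$ componentwise absolute value, $\preceq0$ negative semidefinite. *)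

theory Defs
  imports "HOL-Analysis.Analysis"
begin

(* Vertices of tri_simplex i: x_{i,0} = x0 i, and x_{i,k} = xs i k for k :: 'n (k = 1..n).
   The index set Z_0^n is rendered as 'n option (None = 0). *)
definition vtx :: "('i \<Rightarrow> real^'n) \<Rightarrow> ('i \<Rightarrow> 'n \<Rightarrow> real^'n) \<Rightarrow> 'i \<Rightarrow> 'n option \<Rightarrow> real^'n" where
  "vtx x0 xs i j = (case j of None \<Rightarrow> x0 i | Some k \<Rightarrow> xs i k)"

definition verts :: "('i \<Rightarrow> real^'n) \<Rightarrow> ('i \<Rightarrow> 'n \<Rightarrow> real^'n) \<Rightarrow> 'i \<Rightarrow> (real^'n) set" where
  "verts x0 xs i = insert (x0 i) (range (xs i))"

definition tri_simplex :: "('i \<Rightarrow> real^'n) \<Rightarrow> ('i \<Rightarrow> 'n \<Rightarrow> real^'n) \<Rightarrow> 'i \<Rightarrow> (real^'n) set" where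
  "tri_simplex x0 xs i = convex hull (verts x0 xs i)"

definition vertex_set :: "'i set \<Rightarrow> ('i \<Rightarrow> real^'n) \<Rightarrow> ('i \<Rightarrow> 'n \<Rightarrow> real^'n) \<Rightarrow> (real^'n) set" where
  "vertex_set I x0 xs = (\<Union>i\<in>I. verts x0 xs i)"

definition triangulation :: "(real^'n) set \<Rightarrow> 'i set \<Rightarrow> ('i \<Rightarrow> real^'n) \<Rightarrow> ('i \<Rightarrow> 'n \<Rightarrow> real^'n) \<Rightarrow> bool" where
  "triangulation \<Omega> I x0 xs \<longleftrightarrow>
     finite I \<and>
     (\<forall>i\<in>I. inj (xs i) \<and> x0 i \<notin> range (xs i) \<and> \<not> affine_dependent (verts x0 xs i)) \<and>
     (\<Union>i\<in>I. tri_simplex x0 xs i) = \<Omega> \<and>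
     (\<forall>i\<in>I. \<forall>k\<in>I. i \<noteq> k \<longrightarrow>
        tri_simplex x0 xs i \<inter> tri_simplex x0 xs k = convex hull (verts x0 xs i \<inter> verts x0 xs k)) \<and>
     (\<forall>i\<in>I. 0 \<in> tri_simplex x0 xs i \<longrightarrow> x0 i = 0)"

definition d1 :: "(real^'n) set \<Rightarrow> (real^'n \<Rightarrow> real) \<Rightarrow> 'n \<Rightarrow> real^'n \<Rightarrow> real" where
  "d1 S \<phi> b y = frechet_derivative \<phi> (at y within S) (axis b 1)"

definition d2 :: "(real^'n) set \<Rightarrow> (real^'n \<Rightarrow> real) \<Rightarrow> 'n \<Rightarrow> 'n \<Rightarrow> real^'n \<Rightarrow> real" where
  "d2 S \<phi> a b x = frechet_derivative (\<lambda>y. d1 S \<phi> b y) (at x within S) (axis a 1)"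

definition C2_on :: "(real^'n) set \<Rightarrow> (real^'n \<Rightarrow> real) \<Rightarrow> bool" where
  "C2_on S \<phi> \<longleftrightarrow>
     (\<forall>x\<in>S. \<phi> differentiable (at x within S)) \<and>
     (\<forall>b. \<forall>x\<in>S. (\<lambda>y. d1 S \<phi> b y) differentiable (at x within S)) \<and>
     (\<forall>a b. continuous_on S (d2 S \<phi> a b))"

definition second_partials_bounded :: "(real^'n) set \<Rightarrow> (real^'n \<Rightarrow> real) \<Rightarrow> real \<Rightarrow> bool" where
  "second_partials_bounded S \<phi> \<beta> \<longleftrightarrow> (\<forall>a b. \<forall>x\<in>S. \<bar>d2 S \<phi> a b x\<bar> \<le> \<beta>)"

definition mat_inf_norm :: "real^'c^'r \<Rightarrow> real" where
  "mat_inf_norm A = Max (range (\<lambda>r. \<Sum>c\<in>UNIV. \<bar>A $ r $ c\<bar>))"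

definition gbar :: "(real^'n \<Rightarrow> real^'m^'n) \<Rightarrow> real^'n \<Rightarrow> real" where
  "gbar G x = mat_inf_norm (G x ** transpose (G x))"

definition cc :: "('i \<Rightarrow> real^'n) \<Rightarrow> ('i \<Rightarrow> 'n \<Rightarrow> real^'n) \<Rightarrow> 'i \<Rightarrow> 'n option \<Rightarrow> real" where
  "cc x0 xs i j = real CARD('n) / 2 * norm (vtx x0 xs i j - x0 i) *
      (Max (range (\<lambda>k. norm (xs i k - x0 i))) + norm (vtx x0 xs i j - x0 i))"

definition Xmat :: "('i \<Rightarrow> real^'n) \<Rightarrow> ('i \<Rightarrow> 'n \<Rightarrow> real^'n) \<Rightarrow> 'i \<Rightarrow> real^'n^'n" where
  "Xmat x0 xs i = (\<chi> k. xs i k - x0 i)"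

definition Vbar :: "(real^'n \<Rightarrow> real) \<Rightarrow> ('i \<Rightarrow> real^'n) \<Rightarrow> ('i \<Rightarrow> 'n \<Rightarrow> real^'n) \<Rightarrow> 'i \<Rightarrow> real^'n" where
  "Vbar V x0 xs i = (\<chi> k. V (xs i k) - V (x0 i))"

(* nabla V_i = X_i^{-1} V_bar_i   (also used for delta nabla V_i with delta V) *)
definition gradV :: "(real^'n \<Rightarrow> real) \<Rightarrow> ('i \<Rightarrow> real^'n) \<Rightarrow> ('i \<Rightarrow> 'n \<Rightarrow> real^'n) \<Rightarrow> 'i \<Rightarrow> real^'n" where
  "gradV V x0 xs i = matrix_inv (Xmat x0 xs i) *v Vbar V x0 xs i"

definition onesum :: "real^'n \<Rightarrow> real" where
  "onesum v = (\<Sum>k\<in>UNIV. v $ k)"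

definition Hval :: "(real^'n \<Rightarrow> real^'n) \<Rightarrow> (real^'n \<Rightarrow> real^'m^'n) \<Rightarrow> (real^'n \<Rightarrow> real^'q)
    \<Rightarrow> ('i \<Rightarrow> real^'n) \<Rightarrow> ('i \<Rightarrow> 'n \<Rightarrow> real^'n)
    \<Rightarrow> ('i \<Rightarrow> real) \<Rightarrow> ('i \<Rightarrow> real) \<Rightarrow> ('i \<Rightarrow> real)
    \<Rightarrow> (real^'n \<Rightarrow> real) \<Rightarrow> ('i \<Rightarrow> real^'n) \<Rightarrow> real \<Rightarrow> 'i \<Rightarrow> 'n option \<Rightarrow> real" where
  "Hval f G h x0 xs \<beta> \<beta>t \<beta>b V l \<gamma> i j =
     (let x = vtx x0 xs i j; c = cc x0 xs i j in
      f x \<bullet> gradV V x0 xs i + 1/2 * (norm (h x))\<^sup>2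
      + (onesum (l i) * \<beta> i + 1/2 * \<beta>t i) * c
      + 1 / (2 * \<gamma>) * (gbar G x + \<beta>b i * c) * (onesum (l i))\<^sup>2)"

definition feasF :: "(real^'n \<Rightarrow> real^'n) \<Rightarrow> (real^'n \<Rightarrow> real^'m^'n) \<Rightarrow> (real^'n \<Rightarrow> real^'q)
    \<Rightarrow> 'i set \<Rightarrow> ('i \<Rightarrow> real^'n) \<Rightarrow> ('i \<Rightarrow> 'n \<Rightarrow> real^'n)
    \<Rightarrow> ('i \<Rightarrow> real) \<Rightarrow> ('i \<Rightarrow> real) \<Rightarrow> ('i \<Rightarrow> real)
    \<Rightarrow> (real^'n \<Rightarrow> real) \<Rightarrow> ('i \<Rightarrow> real^'n) \<Rightarrow> real \<Rightarrow> real \<Rightarrow> bool" where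
  "feasF f G h I x0 xs \<beta> \<beta>t \<beta>b V l b1 \<gamma> \<longleftrightarrow>
     \<gamma> > 0 \<and>
     (\<forall>x\<in>vertex_set I x0 xs. V x \<ge> 0) \<and>
     (\<forall>i\<in>I. \<forall>k. \<bar>gradV V x0 xs i $ k\<bar> \<le> l i $ k) \<and>
     (\<forall>i\<in>I. \<forall>j. vtx x0 xs i j \<noteq> 0 \<longrightarrow> Hval f G h x0 xs \<beta> \<beta>t \<beta>b V l \<gamma> i j \<le> - b1)"

definition neg_semidef :: "real^'k^'k \<Rightarrow> bool" where
  "neg_semidef A \<longleftrightarrow> (\<forall>v. v \<bullet> (A *v v) \<le> 0)"

definition Pmat :: "(real^'n \<Rightarrow> real^'n) \<Rightarrow> (real^'n \<Rightarrow> real^'m^'n) \<Rightarrow> (real^'n \<Rightarrow> real^'q)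
    \<Rightarrow> ('i \<Rightarrow> real^'n) \<Rightarrow> ('i \<Rightarrow> 'n \<Rightarrow> real^'n)
    \<Rightarrow> ('i \<Rightarrow> real) \<Rightarrow> ('i \<Rightarrow> real) \<Rightarrow> ('i \<Rightarrow> real)
    \<Rightarrow> (real^'n \<Rightarrow> real) \<Rightarrow> ('i \<Rightarrow> real^'n) \<Rightarrow> real \<Rightarrow> real
    \<Rightarrow> (real^'n \<Rightarrow> real) \<Rightarrow> ('i \<Rightarrow> real^'n) \<Rightarrow> real \<Rightarrow> real
    \<Rightarrow> 'i \<Rightarrow> 'n option \<Rightarrow> real^2^2" where
  "Pmat f G h x0 xs \<beta> \<beta>t \<beta>b V l b1 \<gamma> dV dl db1 d\<gamma> i j =
     (let x = vtx x0 xs i j; c = cc x0 xs i j;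
          \<phi> = f x \<bullet> (gradV V x0 xs i + gradV dV x0 xs i) + onesum (l i + dl i) * \<beta> i * c
              + 1/2 * (h x \<bullet> h x) + 1/2 * \<beta>t i * c;
          e = 1/2 * (gbar G x + \<beta>b i * c);
          off = sqrt e * onesum (l i + dl i) in
      vector [vector [\<phi> + b1 + db1, off], vector [off, - (\<gamma> + d\<gamma>)]])"

definition feasD :: "(real^'n \<Rightarrow> real^'n) \<Rightarrow> (real^'n \<Rightarrow> real^'m^'n) \<Rightarrow> (real^'n \<Rightarrow> real^'q)
    \<Rightarrow> 'i set \<Rightarrow> ('i \<Rightarrow> real^'n) \<Rightarrow> ('i \<Rightarrow> 'n \<Rightarrow> real^'n)
    \<Rightarrow> ('i \<Rightarrow> real) \<Rightarrow> ('i \<Rightarrow> real) \<Rightarrow> ('i \<Rightarrow> real)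
    \<Rightarrow> (real^'n \<Rightarrow> real) \<Rightarrow> ('i \<Rightarrow> real^'n) \<Rightarrow> real \<Rightarrow> real
    \<Rightarrow> (real^'n \<Rightarrow> real) \<Rightarrow> ('i \<Rightarrow> real^'n) \<Rightarrow> real \<Rightarrow> real \<Rightarrow> bool" where
  "feasD f G h I x0 xs \<beta> \<beta>t \<beta>b V l b1 \<gamma> dV dl db1 d\<gamma> \<longleftrightarrow>
     \<gamma> + d\<gamma> > 0 \<and>
     (\<forall>x\<in>vertex_set I x0 xs. V x + dV x \<ge> 0) \<and>
     (\<forall>i\<in>I. \<forall>k. \<bar>gradV V x0 xs i $ k + gradV dV x0 xs i $ k\<bar> \<le> l i $ k + dl i $ k) \<and>
     (\<forall>i\<in>I. \<forall>j. vtx x0 xs i j \<noteq> 0 \<longrightarrow>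
        neg_semidef (Pmat f G h x0 xs \<beta> \<beta>t \<beta>b V l b1 \<gamma> dV dl db1 d\<gamma> i j))"

end

theory Submission
  imports Defs
begin

text \<open>The update problem is just system (F) rewritten in the unknown \<open>\<delta>y\<close>: by the Schur
  complement with respect to the entry \<open>-(\<gamma> + \<delta>\<gamma>) < 0\<close>, the matrix \<open>P\<^sub>i\<^sub>,\<^sub>j\<close> is negative
  semidefinite exactly when \<open>H\<^sub>i\<^sub>,\<^sub>j \<le> -(b\<^sub>1 + \<delta>b\<^sub>1)\<close> at the updated point, and \<open>\<nabla>V\<^sub>i\<close> is linear
  in \<open>V\<close>. Hence \<open>\<delta>y\<close> is feasible iff \<open>y + \<delta>y\<close> is feasible for (F); in particular \<open>\<delta>y = 0\<close> is
  feasible, so an optimal \<open>\<delta>y\<^sup>*\<close> cannot do worse than it.\<close>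

lemma inner_matrix_2x2:
  fixes v :: "real^2"
  shows "v \<bullet> ((vector [vector [a, q], vector [q, c]] :: real^2^2) *v v)
           = a * (v$1)\<^sup>2 + 2 * q * (v$1) * (v$2) + c * (v$2)\<^sup>2"
proof -
  have "v \<bullet> ((vector [vector [a, q], vector [q, c]] :: real^2^2) *v v)
          = v$1 * (a * v$1 + q * v$2) + v$2 * (q * v$1 + c * v$2)"
    by (simp add: inner_vec_def matrix_vector_mult_def sum_2)
  then show ?thesis by (simp add: power2_eq_square algebra_simps)
qed

lemma neg_semidef_2x2_iff_schur:
  fixes a q g :: real
  assumes "g > 0"
  shows "neg_semidef (vector [vector [a, q], vector [q, - g]] :: real^2^2) \<longleftrightarrow> a + q\<^sup>2 / g \<le> 0"
proof -
  have "a + q\<^sup>2 / g \<le> 0 \<longleftrightarrow> a * g + q\<^sup>2 \<le> 0"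
    using assms by (simp add: field_simps)
  moreover have "neg_semidef (vector [vector [a, q], vector [q, - g]] :: real^2^2) \<longleftrightarrow> a * g + q\<^sup>2 \<le> 0"
  proof
    assume "neg_semidef (vector [vector [a, q], vector [q, - g]] :: real^2^2)"
    then have "(vector [g, q] :: real^2) \<bullet> ((vector [vector [a, q], vector [q, - g]] :: real^2^2) *v vector [g, q]) \<le> 0"
      unfolding neg_semidef_def by blast
    then have "g * (a * g + q\<^sup>2) \<le> 0"
      unfolding inner_matrix_2x2 by (simp add: power2_eq_square algebra_simps)
    then show "a * g + q\<^sup>2 \<le> 0"
      using assms by (simp add: mult_le_0_iff)
  next
    assume schur: "a * g + q\<^sup>2 \<le> 0"
    show "neg_semidef (vector [vector [a, q], vector [q, - g]] :: real^2^2)"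
      unfolding neg_semidef_def inner_matrix_2x2
    proof
      fix v :: "real^2"
      have "g * (a * (v$1)\<^sup>2 + 2 * q * (v$1) * (v$2) + - g * (v$2)\<^sup>2)
              = (a * g + q\<^sup>2) * (v$1)\<^sup>2 - (q * (v$1) - g * (v$2))\<^sup>2"
        by (simp add: power2_eq_square algebra_simps)
      also have "\<dots> \<le> 0"
        using mult_nonpos_nonneg [OF schur zero_le_power2 [of "v$1"]]
          zero_le_power2 [of "q * v$1 - g * v$2"] by linarith
      finally show "a * (v$1)\<^sup>2 + 2 * q * (v$1) * (v$2) + - g * (v$2)\<^sup>2 \<le> 0"
        using assms by (simp add: mult_le_0_iff)
    qed
  qed
  ultimately show ?thesis by simp
qed

lemma gradV_add: "gradV (\<lambda>x. V x + W x) x0 xs i = gradV V x0 xs i + gradV W x0 xs i"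
proof -
  have "Vbar (\<lambda>x. V x + W x) x0 xs i = Vbar V x0 xs i + Vbar W x0 xs i"
    unfolding Vbar_def by (simp add: vec_eq_iff)
  then show ?thesis
    unfolding gradV_def by (simp add: matrix_vector_right_distrib)
qed

lemma mat_inf_norm_nonneg:
  fixes A :: "real^'c^'r"
  shows "0 \<le> mat_inf_norm A"
proof -
  fix r :: 'r
  let ?row = "\<lambda>r. \<Sum>c\<in>UNIV. \<bar>A $ r $ c\<bar>"
  have "0 \<le> ?row r" by (simp add: sum_nonneg)
  also have "\<dots> \<le> Max (range ?row)" by (rule Max_ge) auto
  finally show ?thesis unfolding mat_inf_norm_def .
qed

lemma gbar_nonneg: "0 \<le> gbar G x"
  unfolding gbar_def by (rule mat_inf_norm_nonneg)

lemma cc_nonneg: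
  fixes xs :: "'i \<Rightarrow> 'n \<Rightarrow> real^'n"
  shows "0 \<le> cc x0 xs i j"
proof -
  fix k :: 'n
  have "0 \<le> norm (xs i k - x0 i)" by simp
  also have "\<dots> \<le> Max (range (\<lambda>k. norm (xs i k - x0 i)))" by (rule Max_ge) auto
  finally show ?thesis unfolding cc_def by simp
qed

lemma second_partials_bounded_nonneg:
  assumes "second_partials_bounded S \<phi> \<beta>" and "x \<in> S"
  shows "0 \<le> \<beta>"
  using assms unfolding second_partials_bounded_def by (meson abs_ge_zero order_trans)

lemma tri_simplex_nonempty: "x0 i \<in> tri_simplex x0 xs i"
  unfolding tri_simplex_def verts_def by (simp add: hull_inc)

lemma neg_semidef_Pmat_iff_Hval:
  assumes \<gamma>_pos: "\<gamma> + d\<gamma> > 0" and \<beta>b_nonneg: "0 \<le> \<beta>b i"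
  shows "neg_semidef (Pmat f G h x0 xs \<beta> \<beta>t \<beta>b V l b1 \<gamma> dV dl db1 d\<gamma> i j)
     \<longleftrightarrow> Hval f G h x0 xs \<beta> \<beta>t \<beta>b (\<lambda>x. V x + dV x) (\<lambda>i. l i + dl i) (\<gamma> + d\<gamma>) i j \<le> - (b1 + db1)"
proof -
  define x where "x = vtx x0 xs i j"
  define c where "c = cc x0 xs i j"
  define s where "s = onesum (l i + dl i)"
  define e where "e = 1/2 * (gbar G x + \<beta>b i * c)"
  define \<phi> where "\<phi> = f x \<bullet> (gradV V x0 xs i + gradV dV x0 xs i) + s * \<beta> i * c
                     + 1/2 * (h x \<bullet> h x) + 1/2 * \<beta>t i * c"
  have "0 \<le> e"
    unfolding e_def c_def using gbar_nonneg [of G x] cc_nonneg [of x0 xs i j] \<beta>b_nonneg by simp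
  then have off_sq: "(sqrt e * s)\<^sup>2 = e * s\<^sup>2"
    by (simp add: power_mult_distrib)
  have P: "Pmat f G h x0 xs \<beta> \<beta>t \<beta>b V l b1 \<gamma> dV dl db1 d\<gamma> i j
       = vector [vector [\<phi> + b1 + db1, sqrt e * s], vector [sqrt e * s, - (\<gamma> + d\<gamma>)]]"
    unfolding Pmat_def Let_def x_def c_def s_def e_def \<phi>_def ..
  have "neg_semidef (Pmat f G h x0 xs \<beta> \<beta>t \<beta>b V l b1 \<gamma> dV dl db1 d\<gamma> i j)
          \<longleftrightarrow> \<phi> + b1 + db1 + e * s\<^sup>2 / (\<gamma> + d\<gamma>) \<le> 0"
    unfolding P neg_semidef_2x2_iff_schur [OF \<gamma>_pos] off_sq ..
  also have "\<phi> + b1 + db1 + e * s\<^sup>2 / (\<gamma> + d\<gamma>)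
               = Hval f G h x0 xs \<beta> \<beta>t \<beta>b (\<lambda>x. V x + dV x) (\<lambda>i. l i + dl i) (\<gamma> + d\<gamma>) i j + (b1 + db1)"
    unfolding Hval_def Let_def gradV_add power2_norm_eq_inner \<phi>_def e_def x_def c_def s_def
    by (simp add: field_simps)
  finally show ?thesis by linarith
qed

lemma feasD_iff_feasF_update:
  assumes \<beta>b_nonneg: "\<forall>i\<in>I. 0 \<le> \<beta>b i"
  shows "feasD f G h I x0 xs \<beta> \<beta>t \<beta>b V l b1 \<gamma> dV dl db1 d\<gamma>
     \<longleftrightarrow> feasF f G h I x0 xs \<beta> \<beta>t \<beta>b (\<lambda>x. V x + dV x) (\<lambda>i. l i + dl i) (b1 + db1) (\<gamma> + d\<gamma>)"
proof -
  have "(\<forall>i\<in>I. \<forall>j. vtx x0 xs i j \<noteq> 0 \<longrightarrow>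
            neg_semidef (Pmat f G h x0 xs \<beta> \<beta>t \<beta>b V l b1 \<gamma> dV dl db1 d\<gamma> i j))
     \<longleftrightarrow> (\<forall>i\<in>I. \<forall>j. vtx x0 xs i j \<noteq> 0 \<longrightarrow>
            Hval f G h x0 xs \<beta> \<beta>t \<beta>b (\<lambda>x. V x + dV x) (\<lambda>i. l i + dl i) (\<gamma> + d\<gamma>) i j
              \<le> - (b1 + db1))"
    if "\<gamma> + d\<gamma> > 0"
  proof (intro ball_cong all_cong imp_cong refl)
    fix i j
    assume "i \<in> I"
    show "neg_semidef (Pmat f G h x0 xs \<beta> \<beta>t \<beta>b V l b1 \<gamma> dV dl db1 d\<gamma> i j)
       \<longleftrightarrow> Hval f G h x0 xs \<beta> \<beta>t \<beta>b (\<lambda>x. V x + dV x) (\<lambda>i. l i + dl i) (\<gamma> + d\<gamma>) i j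
              \<le> - (b1 + db1)"
      using \<beta>b_nonneg \<open>i \<in> I\<close> by (intro neg_semidef_Pmat_iff_Hval [OF that]) blast
  qed
  then show ?thesis
    unfolding feasD_def feasF_def gradV_add vector_add_component by meson
qed
theorem theorem4:
  fixes f :: "real^'n \<Rightarrow> real^'n" and G :: "real^'n \<Rightarrow> real^'m^'n" and h :: "real^'n \<Rightarrow> real^'q"
    and \<Omega> :: "(real^'n) set" and I :: "'i set"
    and x0 :: "'i \<Rightarrow> real^'n" and xs :: "'i \<Rightarrow> 'n \<Rightarrow> real^'n"
    and \<beta> \<beta>t \<beta>b :: "'i \<Rightarrow> real"
    and V :: "real^'n \<Rightarrow> real" and l :: "'i \<Rightarrow> real^'n" and b1 \<gamma> :: real
    and J :: "(real^'n \<Rightarrow> real) \<Rightarrow> ('i \<Rightarrow> real^'n) \<Rightarrow> real \<Rightarrow> real \<Rightarrow> real"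
  assumes \<Omega>_compact: "compact \<Omega>"
    and \<Omega>_conn: "connected (interior \<Omega>)"
    and \<Omega>_zero: "0 \<in> \<Omega>"
    and \<Omega>_reg: "closure (interior \<Omega>) = \<Omega>"
    and tri: "triangulation \<Omega> I x0 xs"
    and f_cont: "continuous_on \<Omega> f"
    and G_cont: "continuous_on \<Omega> G"
    and h_cont: "continuous_on \<Omega> h"
    and f_C2: "\<forall>i\<in>I. \<forall>k. C2_on (tri_simplex x0 xs i) (\<lambda>x. f x $ k)"
    and G_C2: "\<forall>i\<in>I. \<forall>r c. C2_on (tri_simplex x0 xs i) (\<lambda>x. G x $ r $ c)"
    and h_C2: "\<forall>i\<in>I. \<forall>k. C2_on (tri_simplex x0 xs i) (\<lambda>x. h x $ k)"
    and gbar_C2: "\<forall>i\<in>I. C2_on (tri_simplex x0 xs i) (gbar G)"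
    and \<beta>_bound: "\<forall>i\<in>I. \<forall>k. second_partials_bounded (tri_simplex x0 xs i) (\<lambda>x. f x $ k) (\<beta> i)"
    and \<beta>t_bound: "\<forall>i\<in>I. second_partials_bounded (tri_simplex x0 xs i) (\<lambda>x. h x \<bullet> h x) (\<beta>t i)"
    and \<beta>b_bound: "\<forall>i\<in>I. second_partials_bounded (tri_simplex x0 xs i) (gbar G) (\<beta>b i)"
    and feas: "feasF f G h I x0 xs \<beta> \<beta>t \<beta>b V l b1 \<gamma>"
  shows "(\<forall>dV dl db1 d\<gamma>. feasD f G h I x0 xs \<beta> \<beta>t \<beta>b V l b1 \<gamma> dV dl db1 d\<gamma> \<longrightarrow>
            feasF f G h I x0 xs \<beta> \<beta>t \<beta>b (\<lambda>x. V x + dV x) (\<lambda>i. l i + dl i) (b1 + db1) (\<gamma> + d\<gamma>))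
       \<and> (\<forall>dV dl db1 d\<gamma>.
            (feasD f G h I x0 xs \<beta> \<beta>t \<beta>b V l b1 \<gamma> dV dl db1 d\<gamma> \<and>
             (\<forall>dV' dl' db1' d\<gamma>'. feasD f G h I x0 xs \<beta> \<beta>t \<beta>b V l b1 \<gamma> dV' dl' db1' d\<gamma>' \<longrightarrow>
                J (\<lambda>x. V x + dV x) (\<lambda>i. l i + dl i) (b1 + db1) (\<gamma> + d\<gamma>)
                \<le> J (\<lambda>x. V x + dV' x) (\<lambda>i. l i + dl' i) (b1 + db1') (\<gamma> + d\<gamma>')))
            \<longrightarrow> J (\<lambda>x. V x + dV x) (\<lambda>i. l i + dl i) (b1 + db1) (\<gamma> + d\<gamma>) \<le> J V l b1 \<gamma>)"
proof -
  have \<beta>b_nonneg: "\<forall>i\<in>I. 0 \<le> \<beta>b i"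
    using \<beta>b_bound by (blast intro: second_partials_bounded_nonneg tri_simplex_nonempty)
  note update_feasible = feasD_iff_feasF_update [OF \<beta>b_nonneg]
  have zero_feasible: "feasD f G h I x0 xs \<beta> \<beta>t \<beta>b V l b1 \<gamma> (\<lambda>x. 0) (\<lambda>i. 0) 0 0"
    using feas by (simp add: update_feasible)
  show ?thesis
  proof (intro conjI allI impI)
    fix dV dl db1 d\<gamma>
    assume "feasD f G h I x0 xs \<beta> \<beta>t \<beta>b V l b1 \<gamma> dV dl db1 d\<gamma>"
    then show "feasF f G h I x0 xs \<beta> \<beta>t \<beta>b (\<lambda>x. V x + dV x) (\<lambda>i. l i + dl i) (b1 + db1) (\<gamma> + d\<gamma>)"
      by (simp only: update_feasible)
  next
    fix dV dl db1 d\<gamma>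
    assume "feasD f G h I x0 xs \<beta> \<beta>t \<beta>b V l b1 \<gamma> dV dl db1 d\<gamma> \<and>
             (\<forall>dV' dl' db1' d\<gamma>'. feasD f G h I x0 xs \<beta> \<beta>t \<beta>b V l b1 \<gamma> dV' dl' db1' d\<gamma>' \<longrightarrow>
                J (\<lambda>x. V x + dV x) (\<lambda>i. l i + dl i) (b1 + db1) (\<gamma> + d\<gamma>)
                \<le> J (\<lambda>x. V x + dV' x) (\<lambda>i. l i + dl' i) (b1 + db1') (\<gamma> + d\<gamma>'))"
    then have "J (\<lambda>x. V x + dV x) (\<lambda>i. l i + dl i) (b1 + db1) (\<gamma> + d\<gamma>)
                 \<le> J (\<lambda>x. V x + 0) (\<lambda>i. l i + 0) (b1 + 0) (\<gamma> + 0)"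
      using zero_feasible by blast
    then show "J (\<lambda>x. V x + dV x) (\<lambda>i. l i + dl i) (b1 + db1) (\<gamma> + d\<gamma>) \<le> J V l b1 \<gamma>"
      by simp
  qed
qed

end
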